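(* Let $\mathbf A=(A;\cdot,\to,\leadsto,1)$ be a pseudo-hoop and let $M\subseteq A$ be any subset. Define $f:M^\perp\times M^{\perp\perp}\to A$ by $f(x,y)=x\wedge y$. Then $f$ is injective and, for all $(x_1,y_1),(x_2,y_2)\in M^\perp\times M^{\perp\perp}$, $$f(x_1,y_1)\cdot f(x_2,y_2)=f(x_1\cdot x_2,\,y_1\cdot y_2),\quad f(x_1,y_1)\to f(x_2,y_2)=f(x_1\to x_2,\,y_1\to y_2),$$ $$f(x_1,y_1)\leadsto f(x_2,y_2)=f(x_1\leadsto x_2,\,y_1\leadsto y_2);$$ i.e. $f$ is an embedding of the direct product pseudo-hoop $M^\perp\times M^{\perp\perp}$ into $\mathbf A$.
   Context: A pseudo-hoop is an algebra $(A;\cdot,\to,\leadsto,1)$ of type $\langle 2,2,2,0\rangle$ such that for all $x,y,z\in A$: $x\cdot 1=x=1\cdot x$; $x\to x=1=x\leadsto x$; $(x\cdot y)\to z=x\to(y\to z)$; $(x\cdot y)\leadsto z=y\leadsto(x\leadsto z)$; and $(x\to y)\cdot x=(y\to x)\cdot y=x\cdot(x\leadsto y)=y\cdot(y\leadsto x)$. Setting $x\le y$ iff $x\to y=1$ (equivalently $x\leadsto y=1$) gives a partial order with greatest element $1$ in which $x\wedge y=(x\to y)\cdot x$ exists for all $x,y$. For $x,y\in A$, "$x\vee y=1$" means that the supremum of $\{x,y\}$ exists and equals $1$. For $M\subseteq A$, $M^\perp=\{x\in A\mid x\vee y=1\text{ for every }y\in M\}$ and $M^{\perp\perp}=(M^\perp)^\perp$.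 The sets $M^\perp$ and $M^{\perp\perp}$ contain $1$ and are closed under $\cdot,\to,\leadsto$, so $M^\perp\times M^{\perp\perp}$ is a pseudo-hoop with componentwise operations. *)

theory Defs
  imports Main
begin

locale pseudo_hoop =
  fixes mult :: "'a \<Rightarrow> 'a \<Rightarrow> 'a"
    and imp :: "'a \<Rightarrow> 'a \<Rightarrow> 'a"
    and limp :: "'a \<Rightarrow> 'a \<Rightarrow> 'a"
    and one :: "'a"
  assumes mult_one: "\<And>x. mult x one = x"
    and one_mult: "\<And>x. mult one x = x"
    and imp_self: "\<And>x. imp x x = one"
    and limp_self: "\<And>x. limp x x = one"
    and imp_mult: "\<And>x y z. imp (mult x y) z = imp x (imp y z)"
    and limp_mult: "\<And>x y z. limp (mult x y) z = limp y (limp x z)"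
    and divis1: "\<And>x y. mult (imp x y) x = mult (imp y x) y"
    and divis2: "\<And>x y. mult (imp y x) y = mult x (limp x y)"
    and divis3: "\<And>x y. mult x (limp x y) = mult y (limp y x)"

definition ph_le :: "('a \<Rightarrow> 'a \<Rightarrow> 'a) \<Rightarrow> 'a \<Rightarrow> 'a \<Rightarrow> 'a \<Rightarrow> bool" where
  "ph_le imp one x y \<longleftrightarrow> imp x y = one"

definition ph_meet :: "('a \<Rightarrow> 'a \<Rightarrow> 'a) \<Rightarrow> ('a \<Rightarrow> 'a \<Rightarrow> 'a) \<Rightarrow> 'a \<Rightarrow> 'a \<Rightarrow> 'a" where
  "ph_meet mult imp x y = mult (imp x y) x"

text \<open>"x \<or> y = 1": the supremum of {x,y} exists and equals 1, i.e. 1 is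
  the least upper bound of {x,y} w.r.t. ph_le.\<close>
definition ph_join_one :: "('a \<Rightarrow> 'a \<Rightarrow> 'a) \<Rightarrow> 'a \<Rightarrow> 'a \<Rightarrow> 'a \<Rightarrow> bool" where
  "ph_join_one imp one x y \<longleftrightarrow>
     ph_le imp one x one \<and> ph_le imp one y one \<and>
     (\<forall>z. ph_le imp one x z \<and> ph_le imp one y z \<longrightarrow> ph_le imp one one z)"

definition ph_perp :: "('a \<Rightarrow> 'a \<Rightarrow> 'a) \<Rightarrow> 'a \<Rightarrow> 'a set \<Rightarrow> 'a set" where
  "ph_perp imp one M = {x. \<forall>y\<in>M. ph_join_one imp one x y}"

end

theory Submission
  imports Defs
begin

text \<open>Call \<open>x\<close> and \<open>y\<close> orthogonal if \<open>x \<or> y = 1\<close>. Then \<open>x \<rightarrow> y = y\<close> and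
  \<open>x \<leadsto> y = y\<close>, hence \<open>x \<and> y = x \<cdot> y = y \<cdot> x\<close>: orthogonal elements commute and
  behave like independent coordinates. Orthogonality passes to products and to upper
  bounds, and every element of \<open>M\<^sup>\<bottom>\<close> is orthogonal to every element of \<open>M\<^sup>\<bottom>\<^sup>\<bottom>\<close>.
  Multiplicativity of \<open>(x, y) \<mapsto> x \<and> y\<close> is then a rearrangement of commuting factors,
  and the equations for \<open>\<rightarrow>\<close> and \<open>\<leadsto>\<close> follow from their distributivity over \<open>\<and>\<close> in
  the second argument. The map is injective because \<open>x = y \<rightarrow> (x \<and> y)\<close> and
  \<open>y = x \<leadsto> (x \<and> y)\<close>.\<close>

context pseudo_hoop
begin

abbreviation below :: "'a \<Rightarrow> 'a \<Rightarrow> bool" (infix "\<preceq>" 50)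
  where "x \<preceq> y \<equiv> imp x y = one"

abbreviation meet :: "'a \<Rightarrow> 'a \<Rightarrow> 'a"
  where "meet \<equiv> ph_meet mult imp"

abbreviation join_one :: "'a \<Rightarrow> 'a \<Rightarrow> bool"
  where "join_one \<equiv> ph_join_one imp one"

abbreviation perp :: "'a set \<Rightarrow> 'a set"
  where "perp \<equiv> ph_perp imp one"

lemma imp_one [simp]: "imp x one = one"
  by (metis divis1 divis2 imp_mult imp_self mult_one)

lemma one_imp [simp]: "imp one x = x"
  by (metis limp_self mult_one divis1 imp_mult divis2)

lemma limp_one [simp]: "limp x one = one"
  by (metis limp_self mult_one one_mult divis3 limp_mult)

lemma below_iff_limp: "x \<preceq> y \<longleftrightarrow> limp x y = one"
proof
  assume "x \<preceq> y"
  then have "x = mult y (limp y x)"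
    using divis2[where x = y and y = x] by (simp add: one_mult)
  then have "limp x y = limp (limp y x) (limp y y)"
    by (metis limp_mult)
  then show "limp x y = one"
    by (simp add: limp_self)
next
  assume "limp x y = one"
  then have "x = mult (imp y x) y"
    using divis2[where x = x and y = y] by (simp add: mult_one)
  then have "imp x y = imp (imp y x) (imp y y)"
    by (metis imp_mult)
  then show "x \<preceq> y"
    by (simp add: imp_self)
qed

lemma mult_below_iff_limp: "mult x y \<preceq> z \<longleftrightarrow> y \<preceq> limp x z"
  by (simp add: below_iff_limp limp_mult)

lemma below_antisym: "x \<preceq> y \<Longrightarrow> y \<preceq> x \<Longrightarrow> x = y"
  using divis1[of x y] by (simp add: one_mult)

lemma below_trans:
  assumes "x \<preceq> y" and "y \<preceq> z"
  shows "x \<preceq> z"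
proof -
  have "x = mult (imp y x) y"
    using divis1[of x y] assms(1) by (simp add: one_mult)
  then have "imp x z = imp (imp y x) (imp y z)"
    by (metis imp_mult)
  with assms(2) show ?thesis
    by simp
qed

lemma below_imp: "y \<preceq> imp x y"
  by (simp add: imp_mult[symmetric] mult_below_iff_limp limp_self)

lemma below_limp: "y \<preceq> limp x y"
  by (simp add: mult_below_iff_limp[symmetric] imp_mult imp_self)

lemma mult_assoc: "mult (mult x y) z = mult x (mult y z)"
proof -
  have same_imp: "imp (mult (mult x y) z) w = imp (mult x (mult y z)) w" for w
    by (simp only: imp_mult)
  show ?thesis
    by (rule below_antisym) (simp only: same_imp imp_self, simp only: same_imp[symmetric] imp_self)
qed

lemma mult_mono_left:
  assumes "x \<preceq> y"
  shows "mult x z \<preceq> mult y z"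
proof -
  have "y \<preceq> imp z (mult y z)"
    by (simp add: imp_mult[symmetric] imp_self)
  with assms have "x \<preceq> imp z (mult y z)"
    by (rule below_trans)
  then show ?thesis
    by (simp add: imp_mult)
qed

lemma imp_mono_right:
  assumes "x \<preceq> y"
  shows "imp z x \<preceq> imp z y"
proof -
  have "mult (imp z x) z \<preceq> x"
    by (simp add: imp_mult imp_self)
  then have "mult (imp z x) z \<preceq> y"
    using assms by (rule below_trans)
  then show ?thesis
    by (simp add: imp_mult)
qed

lemma limp_mono_right:
  assumes "x \<preceq> y"
  shows "limp z x \<preceq> limp z y"
proof -
  have "mult z (limp z x) \<preceq> x"
    by (simp add: mult_below_iff_limp imp_self)
  then have "mult z (limp z x) \<preceq> y"
    using assms by (rule below_trans)
  then show ?thesis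
    by (simp add: mult_below_iff_limp)
qed

lemma meet_below_left: "meet x y \<preceq> x"
  by (simp add: ph_meet_def imp_mult imp_self)

lemma meet_below_right: "meet x y \<preceq> y"
  by (simp add: ph_meet_def imp_mult imp_self)

lemma meet_greatest:
  assumes "z \<preceq> x" and "z \<preceq> y"
  shows "z \<preceq> meet x y"
proof -
  have "z = mult (imp x z) x"
    using divis1[of z x] assms(1) by (simp add: one_mult)
  moreover have "imp x z \<preceq> imp x y"
    using assms(2) by (rule imp_mono_right)
  ultimately show ?thesis
    unfolding ph_meet_def by (metis mult_mono_left)
qed

lemma meet_unique:
  assumes "m \<preceq> x" and "m \<preceq> y" and "\<And>z. z \<preceq> x \<Longrightarrow> z \<preceq> y \<Longrightarrow> z \<preceq> m"
  shows "m = meet x y"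
  by (metis assms below_antisym meet_below_left meet_below_right meet_greatest)

lemma meet_one_left: "meet one y = y"
  by (simp add: ph_meet_def mult_one)

lemma meet_one_right: "meet x one = x"
  by (simp add: ph_meet_def one_mult)

lemma imp_meet_distrib: "imp z (meet x y) = meet (imp z x) (imp z y)"
proof (rule meet_unique)
  show "imp z (meet x y) \<preceq> imp z x" "imp z (meet x y) \<preceq> imp z y"
    by (simp_all add: imp_mono_right meet_below_left meet_below_right)
next
  fix w
  assume "w \<preceq> imp z x" and "w \<preceq> imp z y"
  then have "mult w z \<preceq> x" and "mult w z \<preceq> y"
    by (simp_all add: imp_mult)
  then have "mult w z \<preceq> meet x y"
    by (rule meet_greatest)
  then show "w \<preceq> imp z (meet x y)"
    by (simp add: imp_mult)
qed

lemma limp_meet_distrib: "limp z (meet x y) = meet (limp z x) (limp z y)"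
proof (rule meet_unique)
  show "limp z (meet x y) \<preceq> limp z x" "limp z (meet x y) \<preceq> limp z y"
    by (simp_all add: limp_mono_right meet_below_left meet_below_right)
next
  fix w
  assume "w \<preceq> limp z x" and "w \<preceq> limp z y"
  then have "mult z w \<preceq> x" and "mult z w \<preceq> y"
    by (simp_all add: mult_below_iff_limp)
  then have "mult z w \<preceq> meet x y"
    by (rule meet_greatest)
  then show "w \<preceq> limp z (meet x y)"
    by (simp add: mult_below_iff_limp)
qed

lemma join_one_iff: "join_one x y \<longleftrightarrow> (\<forall>z. x \<preceq> z \<and> y \<preceq> z \<longrightarrow> z = one)"
  by (simp add: ph_join_one_def ph_le_def)

lemma join_one_commute: "join_one x y \<Longrightarrow> join_one y x"
  unfolding join_one_iff by blast

lemma join_one_upward: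
  assumes "join_one x y" and "x \<preceq> x'"
  shows "join_one x' y"
  using assms(1) below_trans[OF assms(2)] unfolding join_one_iff by blast

lemma join_one_mult:
  assumes "join_one x z" and "join_one y z"
  shows "join_one (mult x y) z"
  unfolding join_one_iff
proof (intro allI impI)
  fix u
  assume u: "mult x y \<preceq> u \<and> z \<preceq> u"
  then have "x \<preceq> imp y u"
    by (simp add: imp_mult)
  moreover have "z \<preceq> imp y u"
    using below_trans[OF conjunct2[OF u] below_imp] .
  ultimately have "y \<preceq> u"
    using assms(1) unfolding join_one_iff by blast
  with assms(2) u show "u = one"
    unfolding join_one_iff by blast
qed

lemma join_one_imp_eq:
  assumes "join_one x y"
  shows "imp x y = y"
proof (rule below_antisym)
  have "x \<preceq> limp (imp x y) y"
    by (simp add: mult_below_iff_limp[symmetric] imp_mult imp_self)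
  then have "limp (imp x y) y = one"
    using assms below_limp[of y "imp x y"] unfolding join_one_iff by blast
  then show "imp x y \<preceq> y"
    by (simp add: below_iff_limp)
qed (rule below_imp)

lemma join_one_limp_eq:
  assumes "join_one x y"
  shows "limp x y = y"
proof (rule below_antisym)
  have "x \<preceq> imp (limp x y) y"
    by (simp add: imp_mult[symmetric] mult_below_iff_limp imp_self)
  then show "limp x y \<preceq> y"
    using assms below_imp[of y "limp x y"] unfolding join_one_iff by blast
qed (rule below_limp)

lemma join_one_meet_eq_mult: "join_one x y \<Longrightarrow> meet x y = mult x y"
  using divis1[where x = x and y = y] divis2[where x = x and y = y] join_one_limp_eq[of x y]
  by (simp add: ph_meet_def)

lemma join_one_meet_eq_mult_commute: "join_one x y \<Longrightarrow> meet x y = mult y x"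
  by (simp add: ph_meet_def join_one_imp_eq)

lemma join_one_mult_commute: "join_one x y \<Longrightarrow> mult x y = mult y x"
  using join_one_meet_eq_mult join_one_meet_eq_mult_commute by simp

lemma join_one_perp_perp: "x \<in> perp M \<Longrightarrow> y \<in> perp (perp M) \<Longrightarrow> join_one x y"
  unfolding ph_perp_def by (blast dest: join_one_commute)

lemma mult_meet_meet:
  assumes "join_one x1 y1" "join_one x1 y2" "join_one x2 y1" "join_one x2 y2"
  shows "mult (meet x1 y1) (meet x2 y2) = meet (mult x1 x2) (mult y1 y2)"
proof -
  have "join_one (mult x1 x2) (mult y1 y2)"
    using assms by (metis join_one_mult join_one_commute)
  then have "meet (mult x1 x2) (mult y1 y2) = mult (mult x1 x2) (mult y1 y2)"
    by (rule join_one_meet_eq_mult)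
  also have "\<dots> = mult x1 (mult (mult x2 y1) y2)"
    by (simp only: mult_assoc)
  also have "\<dots> = mult x1 (mult (mult y1 x2) y2)"
    using join_one_mult_commute[OF assms(3)] by simp
  also have "\<dots> = mult (meet x1 y1) (meet x2 y2)"
    using assms(1,4) by (simp add: join_one_meet_eq_mult mult_assoc)
  finally show ?thesis ..
qed

lemma imp_meet_meet:
  assumes "join_one x1 y1" "join_one x1 y2" "join_one x2 y1"
  shows "imp (meet x1 y1) (meet x2 y2) = meet (imp x1 x2) (imp y1 y2)"
proof -
  have "imp (meet x1 y1) x2 = imp y1 (imp x1 x2)"
    using assms(1) by (simp add: join_one_meet_eq_mult_commute imp_mult)
  also have "\<dots> = imp x1 x2"
    using assms(3) by (metis join_one_commute join_one_upward below_imp join_one_imp_eq)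
  finally have left: "imp (meet x1 y1) x2 = imp x1 x2" .
  have "imp (meet x1 y1) y2 = imp x1 (imp y1 y2)"
    using assms(1) by (simp add: join_one_meet_eq_mult imp_mult)
  also have "\<dots> = imp y1 y2"
    using assms(2) by (metis join_one_commute join_one_upward below_imp join_one_imp_eq)
  finally have right: "imp (meet x1 y1) y2 = imp y1 y2" .
  show ?thesis
    by (simp only: imp_meet_distrib left right)
qed

lemma limp_meet_meet:
  assumes "join_one x1 y1" "join_one x1 y2" "join_one x2 y1"
  shows "limp (meet x1 y1) (meet x2 y2) = meet (limp x1 x2) (limp y1 y2)"
proof -
  have "limp (meet x1 y1) x2 = limp y1 (limp x1 x2)"
    using assms(1) by (simp add: join_one_meet_eq_mult limp_mult)
  also have "\<dots> = limp x1 x2"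
    using assms(3) by (metis join_one_commute join_one_upward below_limp join_one_limp_eq)
  finally have left: "limp (meet x1 y1) x2 = limp x1 x2" .
  have "limp (meet x1 y1) y2 = limp x1 (limp y1 y2)"
    using assms(1) by (simp add: join_one_meet_eq_mult_commute limp_mult)
  also have "\<dots> = limp y1 y2"
    using assms(2) by (metis join_one_commute join_one_upward below_limp join_one_limp_eq)
  finally have right: "limp (meet x1 y1) y2 = limp y1 y2" .
  show ?thesis
    by (simp only: limp_meet_distrib left right)
qed

lemma join_one_imp_meet: "join_one x y \<Longrightarrow> imp y (meet x y) = x"
  by (simp add: imp_meet_distrib imp_self meet_one_right join_one_imp_eq[OF join_one_commute])

lemma join_one_limp_meet: "join_one x y \<Longrightarrow> limp x (meet x y) = y"
  by (simp add: limp_meet_distrib limp_self meet_one_left join_one_limp_eq)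

lemma meet_eq_imp_below:
  assumes "meet x1 y1 = meet x2 y2"
    and "join_one x1 y1" "join_one x1 y2" "join_one x2 y1"
  shows "x1 \<preceq> x2" and "y1 \<preceq> y2"
proof -
  have "x1 = meet (imp y1 x2) (imp y1 y2)"
    using assms(1,2) join_one_imp_meet[of x1 y1] by (simp add: imp_meet_distrib)
  also have "\<dots> = meet x2 (imp y1 y2)"
    using join_one_imp_eq[OF join_one_commute[OF assms(4)]] by simp
  finally show "x1 \<preceq> x2"
    by (simp add: meet_below_left)
  have "y1 = meet (limp x1 x2) (limp x1 y2)"
    using assms(1,2) join_one_limp_meet[of x1 y1] by (simp add: limp_meet_distrib)
  also have "\<dots> = meet (limp x1 x2) y2"
    using assms(3) by (simp add: join_one_limp_eq)
  finally show "y1 \<preceq> y2"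
    by (simp add: meet_below_right)
qed

lemma inj_on_meet:
  assumes "\<And>x y. x \<in> P \<Longrightarrow> y \<in> Q \<Longrightarrow> join_one x y"
  shows "inj_on (\<lambda>(x, y). meet x y) (P \<times> Q)"
proof (rule inj_onI, clarify)
  fix x1 y1 x2 y2
  assume "x1 \<in> P" "y1 \<in> Q" "x2 \<in> P" "y2 \<in> Q" and "meet x1 y1 = meet x2 y2"
  with assms meet_eq_imp_below[of x1 y1 x2 y2] meet_eq_imp_below[of x2 y2 x1 y1]
  show "x1 = x2 \<and> y1 = y2"
    by (metis below_antisym)
qed

end

theorem theorem4p2:
  fixes mult imp limp :: "'a \<Rightarrow> 'a \<Rightarrow> 'a" and one :: 'a and M :: "'a set"
  assumes "pseudo_hoop mult imp limp one"
  defines "P \<equiv> ph_perp imp one M"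
      and "Q \<equiv> ph_perp imp one (ph_perp imp one M)"
      and "f \<equiv> (\<lambda>(x, y). ph_meet mult imp x y)"
  shows "inj_on f (P \<times> Q) \<and>
         (\<forall>x1\<in>P. \<forall>y1\<in>Q. \<forall>x2\<in>P. \<forall>y2\<in>Q.
           mult (f (x1, y1)) (f (x2, y2)) = f (mult x1 x2, mult y1 y2) \<and>
           imp (f (x1, y1)) (f (x2, y2)) = f (imp x1 x2, imp y1 y2) \<and>
           limp (f (x1, y1)) (f (x2, y2)) = f (limp x1 x2, limp y1 y2))"
proof -
  interpret pseudo_hoop mult imp limp one by fact
  have orth: "join_one x y" if "x \<in> P" "y \<in> Q" for x y
    using that unfolding P_def Q_def by (rule join_one_perp_perp)
  have "inj_on f (P \<times> Q)"
    unfolding f_def using orth by (rule inj_on_meet)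
  moreover have
    "mult (f (x1, y1)) (f (x2, y2)) = f (mult x1 x2, mult y1 y2) \<and>
     imp (f (x1, y1)) (f (x2, y2)) = f (imp x1 x2, imp y1 y2) \<and>
     limp (f (x1, y1)) (f (x2, y2)) = f (limp x1 x2, limp y1 y2)"
    if "x1 \<in> P" "y1 \<in> Q" "x2 \<in> P" "y2 \<in> Q" for x1 y1 x2 y2
    using orth[OF that(1,2)] orth[OF that(1,4)] orth[OF that(3,2)] orth[OF that(3,4)]
    by (simp add: f_def mult_meet_meet imp_meet_meet limp_meet_meet)
  ultimately show ?thesis
    by blast
qed

end
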